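(* Let $T$ be a balanced tree with a proper 2-coloring $\chi:V\to\{\mathcal{R},\mathcal{B}\}$ in which all leaves are blue. If there is a support vertex $s\in V_1$ with $|N(s)\cap V_2|\ge 2$, then $T$ has two minimal RD-sets of different sizes, and hence $T$ is mixed.
   Context: $N(v)=\{u:uv\in E\}$, $N(D)=\bigcup_{v\in D}N(v)$. A leaf is a vertex of degree 1; a support vertex is a vertex adjacent to a leaf. The height of a vertex is its minimum distance to a leaf; $V_k$ is the set of vertices of height $k$; $T$ is balanced if no two adjacent vertices have the same height. An RD-set is $D\subseteq V$ with $N(D)=\chi^{-1}(\mathcal{R})$, minimal if no proper subset is an RD-set. A TD-set is $D$ with $N(D)=V$, minimal if no proper subset is a TD-set; $T$ is mixed if not all minimal TD-sets have the same size. *)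

theory Defs
  imports Main
begin

datatype color = Red | Blue

definition graph :: "'a set \<Rightarrow> 'a set set \<Rightarrow> bool" where
  "graph V E \<longleftrightarrow> finite V \<and> (\<forall>e\<in>E. e \<subseteq> V \<and> card e = 2)"

definition adj :: "'a set set \<Rightarrow> 'a \<Rightarrow> 'a \<Rightarrow> bool" where
  "adj E u v \<longleftrightarrow> {u, v} \<in> E"

definition nbhd :: "'a set set \<Rightarrow> 'a \<Rightarrow> 'a set" where
  "nbhd E v = {u. adj E u v}"

definition nbhd_set :: "'a set set \<Rightarrow> 'a set \<Rightarrow> 'a set" where
  "nbhd_set E D = (\<Union>v\<in>D. nbhd E v)"

definition connected :: "'a set \<Rightarrow> 'a set set \<Rightarrow> bool" where
  "connected V E \<longleftrightarrow> (\<forall>u\<in>V. \<forall>v\<in>V. (adj E)\<^sup>*\<^sup>* u v)"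

definition has_cycle :: "'a set \<Rightarrow> 'a set set \<Rightarrow> bool" where
  "has_cycle V E \<longleftrightarrow> (\<exists>xs. length xs \<ge> 3 \<and> distinct xs \<and> set xs \<subseteq> V \<and>
      (\<forall>i. Suc i < length xs \<longrightarrow> adj E (xs ! i) (xs ! Suc i)) \<and> adj E (last xs) (hd xs))"

definition tree :: "'a set \<Rightarrow> 'a set set \<Rightarrow> bool" where
  "tree V E \<longleftrightarrow> graph V E \<and> V \<noteq> {} \<and> connected V E \<and> \<not> has_cycle V E"

definition leaf :: "'a set \<Rightarrow> 'a set set \<Rightarrow> 'a \<Rightarrow> bool" where
  "leaf V E v \<longleftrightarrow> v \<in> V \<and> card (nbhd E v) = 1"

definition support_vertex :: "'a set \<Rightarrow> 'a set set \<Rightarrow> 'a \<Rightarrow> bool" where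
  "support_vertex V E v \<longleftrightarrow> v \<in> V \<and> (\<exists>l. leaf V E l \<and> adj E v l)"

text \<open>Height: minimum distance (number of edges on a walk, hence of a shortest path)
  to a leaf.\<close>
definition height :: "'a set \<Rightarrow> 'a set set \<Rightarrow> 'a \<Rightarrow> nat" where
  "height V E v = (LEAST k. \<exists>l. leaf V E l \<and> (adj E ^^ k) v l)"

definition level :: "'a set \<Rightarrow> 'a set set \<Rightarrow> nat \<Rightarrow> 'a set" where
  "level V E k = {v \<in> V. height V E v = k}"

definition balanced :: "'a set \<Rightarrow> 'a set set \<Rightarrow> bool" where
  "balanced V E \<longleftrightarrow> (\<forall>u\<in>V. \<forall>v\<in>V. adj E u v \<longrightarrow> height V E u \<noteq> height V E v)"

definition proper_2_coloring :: "'a set \<Rightarrow> 'a set set \<Rightarrow> ('a \<Rightarrow> color) \<Rightarrow> bool" where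
  "proper_2_coloring V E \<chi> \<longleftrightarrow> (\<forall>u\<in>V. \<forall>v\<in>V. adj E u v \<longrightarrow> \<chi> u \<noteq> \<chi> v)"

definition RD_set :: "'a set \<Rightarrow> 'a set set \<Rightarrow> ('a \<Rightarrow> color) \<Rightarrow> 'a set \<Rightarrow> bool" where
  "RD_set V E \<chi> D \<longleftrightarrow> D \<subseteq> V \<and> nbhd_set E D = {v \<in> V. \<chi> v = Red}"

definition minimal_RD_set :: "'a set \<Rightarrow> 'a set set \<Rightarrow> ('a \<Rightarrow> color) \<Rightarrow> 'a set \<Rightarrow> bool" where
  "minimal_RD_set V E \<chi> D \<longleftrightarrow> RD_set V E \<chi> D \<and> (\<forall>D'. D' \<subset> D \<longrightarrow> \<not> RD_set V E \<chi> D')"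

definition TD_set :: "'a set \<Rightarrow> 'a set set \<Rightarrow> 'a set \<Rightarrow> bool" where
  "TD_set V E D \<longleftrightarrow> D \<subseteq> V \<and> nbhd_set E D = V"

definition minimal_TD_set :: "'a set \<Rightarrow> 'a set set \<Rightarrow> 'a set \<Rightarrow> bool" where
  "minimal_TD_set V E D \<longleftrightarrow> TD_set V E D \<and> (\<forall>D'. D' \<subset> D \<longrightarrow> \<not> TD_set V E D')"

definition mixed :: "'a set \<Rightarrow> 'a set set \<Rightarrow> bool" where
  "mixed V E \<longleftrightarrow> (\<exists>D1 D2. minimal_TD_set V E D1 \<and> minimal_TD_set V E D2 \<and> card D1 \<noteq> card D2)"

end

theory Submission
  imports Defs "HOL-Library.Transitive_Closure_Table"
begin

(* The support vertex s is red, since its leaf neighbour l is blue. Take two neighbours u1, u2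
   of s of height 2 (hence not leaves), the branches C1, C2 of T - s at u1, u2 and the rest C0
   of T - s, with red parts R0, R1, R2.

   A red vertex is neither a leaf nor isolated, so it has two blue neighbours, and as T has no
   4-cycle at most one of them is adjacent to any given other vertex. Choosing neighbours
   accordingly and discarding redundant ones, R_i is dominated by a set P_i of blue vertices of
   C_i not adjacent to s, and R_i together with s by a set Q_i containing u_i (i = 1, 2), all of
   whose vertices have private neighbours in R_i. A set dominating exactly its neighbourhood is
   minimal iff all its vertices have private neighbours, so
     {l} U P0 U P1 U P2,   P0 U Q1 U P2,   P0 U P1 U Q2,   P0 U Q1 U Q2
   are minimal RD-sets. The sizes of the first two differ by 1 + |P1| - |Q1|, those of the last
   two by |P1| - |Q1|, so one of these differences is nonzero.

   Adding a fixed irredundant set of red vertices dominating the blue ones turns minimal RD-sets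
   into minimal TD-sets, shifting all sizes by the same amount; hence T is mixed. *)

lemma adj_commute: "adj E u v \<longleftrightarrow> adj E v u"
  unfolding adj_def by (simp add: insert_commute)

lemma in_nbhd_iff [simp]: "u \<in> nbhd E v \<longleftrightarrow> adj E u v"
  unfolding nbhd_def by simp

lemma nbhd_set_Un: "nbhd_set E (A \<union> B) = nbhd_set E A \<union> nbhd_set E B"
  unfolding nbhd_set_def by blast

lemma nbhd_set_insert: "nbhd_set E (insert x A) = nbhd E x \<union> nbhd_set E A"
  unfolding nbhd_set_def by blast

lemma nbhd_set_singleton: "nbhd_set E {x} = nbhd E x"
  unfolding nbhd_set_def by blast

lemma adj_imp_in_V: "graph V E \<Longrightarrow> adj E u v \<Longrightarrow> u \<in> V \<and> v \<in> V"
  unfolding graph_def adj_def by blast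

lemma not_adj_self: "graph V E \<Longrightarrow> \<not> adj E v v"
  unfolding graph_def adj_def by fastforce

lemma proper_2_coloring_adj:
  assumes "graph V E" "proper_2_coloring V E \<chi>" "adj E u v"
  shows "\<chi> u = Red \<longleftrightarrow> \<chi> v = Blue" and "\<chi> u = Blue \<longleftrightarrow> \<chi> v = Red"
proof -
  have "u \<in> V" "v \<in> V" using adj_imp_in_V[OF assms(1,3)] by auto
  then have "\<chi> u \<noteq> \<chi> v"
    using assms(2,3) unfolding proper_2_coloring_def by blast
  then show "\<chi> u = Red \<longleftrightarrow> \<chi> v = Blue" "\<chi> u = Blue \<longleftrightarrow> \<chi> v = Red"
    by (cases "\<chi> u"; cases "\<chi> v"; simp)+
qed

lemma other_nbr:
  assumes "graph V E" "v \<in> V" "\<not> leaf V E v" "adj E v a"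
  obtains b where "adj E v b" "b \<noteq> a"
proof -
  have "nbhd E v \<noteq> {a}"
    using assms(2,3) unfolding leaf_def by auto
  moreover have "a \<in> nbhd E v"
    using assms(4) adj_commute by fastforce
  ultimately obtain b where "b \<in> nbhd E v" "b \<noteq> a" by blast
  then show thesis using that adj_commute by fastforce
qed

lemma leaf_nbhd: "leaf V E l \<Longrightarrow> adj E s l \<Longrightarrow> nbhd E l = {s}"
  unfolding leaf_def by (metis adj_commute card_1_singletonE in_nbhd_iff singletonD)

lemma two_non_leaf_nbrs:
  assumes "card (nbhd E s \<inter> level V E 2) \<ge> 2"
  obtains u1 u2 where "adj E s u1" "adj E s u2" "u1 \<noteq> u2" "\<not> leaf V E u1" "\<not> leaf V E u2"
proof -
  let ?S = "nbhd E s \<inter> level V E 2"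
  have "finite ?S" using assms card_gt_0_iff[of ?S] by linarith
  then obtain u1 u2 where u: "u1 \<in> ?S" "u2 \<in> ?S" "u1 \<noteq> u2"
    using assms card_le_Suc0_iff_eq[of ?S] by auto
  have "\<not> leaf V E u" if "u \<in> level V E 2" for u
  proof
    assume "leaf V E u"
    then have "height V E u = 0" unfolding height_def by (intro Least_eq_0) auto
    then show False using that unfolding level_def by simp
  qed
  then show thesis using that u adj_commute[of E s] by auto
qed

lemma tree_no_isolated:
  assumes "tree V E" "adj E s l" "v \<in> V"
  shows "\<exists>y. adj E v y"
proof -
  have "graph V E" "connected V E" using assms(1) unfolding tree_def by blast+
  moreover have "s \<in> V" using adj_imp_in_V[OF \<open>graph V E\<close> assms(2)] by blast
  ultimately have "(adj E)\<^sup>*\<^sup>* v s" using assms(3) unfolding connected_def by blast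
  then show ?thesis
  proof (cases rule: converse_rtranclpE)
    case base
    then show ?thesis using assms(2) by blast
  next
    case (step y)
    then show ?thesis by blast
  qed
qed

definition adj_avoiding :: "'a set set \<Rightarrow> 'a \<Rightarrow> 'a \<Rightarrow> 'a \<Rightarrow> bool" where
  "adj_avoiding E c x y \<longleftrightarrow> adj E x y \<and> x \<noteq> c \<and> y \<noteq> c"

lemma tree_no_path_avoiding:
  assumes tree: "tree V E" and ca: "adj E c a" and cb: "adj E c b" and "a \<noteq> b"
  shows "\<not> (adj_avoiding E c)\<^sup>*\<^sup>* a b"
proof
  assume "(adj_avoiding E c)\<^sup>*\<^sup>* a b"
  then obtain xs where path: "rtrancl_path (adj_avoiding E c) a xs b"
    and dist: "distinct (a # xs)"
    by (meson rtranclp_eq_rtrancl_path rtrancl_path_distinct)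
  have g: "graph V E" using tree unfolding tree_def by blast
  have "xs \<noteq> []" using path \<open>a \<noteq> b\<close> by (auto elim: rtrancl_path.cases)
  have on_path: "x \<in> V \<and> x \<noteq> c" if "x \<in> set xs" for x
    using rtrancl_path_Range[OF path that] adj_imp_in_V[OF g]
    unfolding adj_avoiding_def by blast
  have "has_cycle V E"
    unfolding has_cycle_def
  proof (intro exI[of _ "c # a # xs"] conjI allI impI)
    show "3 \<le> length (c # a # xs)" using \<open>xs \<noteq> []\<close> by (cases xs) auto
    show "distinct (c # a # xs)"
      using dist on_path ca not_adj_self[OF g] by auto
    show "set (c # a # xs) \<subseteq> V"
      using on_path ca adj_imp_in_V[OF g] by auto
    show "adj E (last (c # a # xs)) (hd (c # a # xs))"
      using rtrancl_path_last[OF path \<open>xs \<noteq> []\<close>] \<open>xs \<noteq> []\<close> cb adj_commute by fastforce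
    fix i assume "Suc i < length (c # a # xs)"
    then show "adj E ((c # a # xs) ! i) ((c # a # xs) ! Suc i)"
      using ca rtrancl_path_nth[OF path] unfolding adj_avoiding_def by (cases i) auto
  qed
  then show False using tree unfolding tree_def by blast
qed

lemma tree_common_nbr_unique:
  assumes tree: "tree V E" and "x \<noteq> y"
    and "adj E x a" "adj E y a" "adj E x b" "adj E y b"
  shows "a = b"
proof (rule ccontr)
  assume "a \<noteq> b"
  have g: "graph V E" using tree unfolding tree_def by blast
  have "adj_avoiding E x a y" "adj_avoiding E x y b"
    using assms not_adj_self[OF g] adj_commute unfolding adj_avoiding_def by metis+
  then have "(adj_avoiding E x)\<^sup>*\<^sup>* a b" by (meson r_into_rtranclp rtranclp.rtrancl_into_rtrancl)
  then show False using tree_no_path_avoiding[OF tree assms(3,5) \<open>a \<noteq> b\<close>] by blast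
qed

lemma tree_nbr_not_adj:
  assumes tree: "tree V E" and "r \<in> V" "\<not> leaf V E r" "adj E r a" "r \<noteq> c"
  obtains b where "adj E r b" "\<not> adj E c b"
proof -
  have g: "graph V E" using tree unfolding tree_def by blast
  obtain a' where "adj E r a'" "a' \<noteq> a" using other_nbr[OF g assms(2-4)] .
  then show thesis
    using that tree_common_nbr_unique[OF tree \<open>r \<noteq> c\<close> \<open>adj E r a\<close>] assms(4) by blast
qed

definition has_private_nbrs :: "'a set set \<Rightarrow> 'a set \<Rightarrow> 'a set \<Rightarrow> bool" where
  "has_private_nbrs E Z D \<longleftrightarrow> (\<forall>x\<in>D. \<exists>r\<in>Z. r \<in> nbhd E x \<and> r \<notin> nbhd_set E (D - {x}))"

lemma has_private_nbrs_mono: "has_private_nbrs E Z D \<Longrightarrow> Z \<subseteq> Z' \<Longrightarrow> has_private_nbrs E Z' D"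
  unfolding has_private_nbrs_def by blast

lemma has_private_nbrs_singleton: "r \<in> nbhd E x \<Longrightarrow> r \<in> Z \<Longrightarrow> has_private_nbrs E Z {x}"
  unfolding has_private_nbrs_def nbhd_set_def by auto

lemma has_private_nbrs_Un:
  assumes "has_private_nbrs E Z X" "has_private_nbrs E W Y"
    and "nbhd_set E Y \<inter> Z = {}" "nbhd_set E X \<inter> W = {}"
  shows "has_private_nbrs E (Z \<union> W) (X \<union> Y)"
  unfolding has_private_nbrs_def
proof
  fix x assume "x \<in> X \<union> Y"
  then consider "x \<in> X" | "x \<in> Y" "x \<notin> X" by blast
  then show "\<exists>r\<in>Z \<union> W. r \<in> nbhd E x \<and> r \<notin> nbhd_set E (X \<union> Y - {x})"
  proof cases
    case 1
    then obtain r where "r \<in> Z" "r \<in> nbhd E x" "r \<notin> nbhd_set E (X - {x})"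
      using assms(1) unfolding has_private_nbrs_def by blast
    then show ?thesis using assms(3) unfolding nbhd_set_def by blast
  next
    case 2
    then obtain r where "r \<in> W" "r \<in> nbhd E x" "r \<notin> nbhd_set E (Y - {x})"
      using assms(2) unfolding has_private_nbrs_def by blast
    then show ?thesis using assms(4) 2 unfolding nbhd_set_def by blast
  qed
qed

lemma has_private_nbrs_iff_minimal:
  assumes "nbhd_set E D = T"
  shows "has_private_nbrs E T D \<longleftrightarrow> (\<forall>D'. D' \<subset> D \<longrightarrow> nbhd_set E D' \<noteq> T)"
proof
  assume privates: "has_private_nbrs E T D"
  show "\<forall>D'. D' \<subset> D \<longrightarrow> nbhd_set E D' \<noteq> T"
  proof (intro allI impI)
    fix D' assume "D' \<subset> D"
    then obtain x where "x \<in> D" "x \<notin> D'" by blast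
    then obtain r where "r \<in> T" "r \<notin> nbhd_set E (D - {x})"
      using privates unfolding has_private_nbrs_def by blast
    moreover have "nbhd_set E D' \<subseteq> nbhd_set E (D - {x})"
      using \<open>D' \<subset> D\<close> \<open>x \<notin> D'\<close> unfolding nbhd_set_def by blast
    ultimately show "nbhd_set E D' \<noteq> T" by blast
  qed
next
  assume minimal: "\<forall>D'. D' \<subset> D \<longrightarrow> nbhd_set E D' \<noteq> T"
  show "has_private_nbrs E T D"
    unfolding has_private_nbrs_def
  proof
    fix x assume "x \<in> D"
    then have "nbhd_set E (D - {x}) \<noteq> T" using minimal by blast
    moreover have "nbhd_set E (D - {x}) \<subseteq> T" using assms unfolding nbhd_set_def by blast
    ultimately obtain r where "r \<in> T" "r \<notin> nbhd_set E (D - {x})" by blast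
    moreover from this have "r \<in> nbhd E x"
      using assms unfolding nbhd_set_def by blast
    ultimately show "\<exists>r\<in>T. r \<in> nbhd E x \<and> r \<notin> nbhd_set E (D - {x})" by blast
  qed
qed

lemma minimal_RD_set_iff:
  "minimal_RD_set V E \<chi> D \<longleftrightarrow> RD_set V E \<chi> D \<and> has_private_nbrs E {v \<in> V. \<chi> v = Red} D"
  using has_private_nbrs_iff_minimal[of E D "{v \<in> V. \<chi> v = Red}"]
  unfolding minimal_RD_set_def RD_set_def by blast

lemma minimal_RD_setI:
  assumes "D \<subseteq> V" "nbhd_set E D = {v \<in> V. \<chi> v = Red}"
    and "has_private_nbrs E Z D" "Z \<subseteq> {v \<in> V. \<chi> v = Red}"
  shows "minimal_RD_set V E \<chi> D"
  using assms has_private_nbrs_mono unfolding minimal_RD_set_iff RD_set_def by blast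

lemma minimal_TD_set_iff:
  "minimal_TD_set V E D \<longleftrightarrow> TD_set V E D \<and> has_private_nbrs E V D"
  using has_private_nbrs_iff_minimal[of E D V]
  unfolding minimal_TD_set_def TD_set_def by blast

lemma exists_private_subcover:
  assumes "finite B" "Z \<subseteq> nbhd_set E B"
  obtains X where "X \<subseteq> B" "Z \<subseteq> nbhd_set E X" "has_private_nbrs E Z X"
proof -
  let ?cover = "\<lambda>X. X \<subseteq> B \<and> Z \<subseteq> nbhd_set E X"
  obtain X where X: "?cover X" and least: "\<And>Y. ?cover Y \<Longrightarrow> card X \<le> card Y"
    using ex_has_least_nat[of ?cover B card] assms by blast
  have "finite X" using X assms(1) finite_subset by blast
  have "has_private_nbrs E Z X"
    unfolding has_private_nbrs_def
  proof
    fix x assume "x \<in> X"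
    show "\<exists>r\<in>Z. r \<in> nbhd E x \<and> r \<notin> nbhd_set E (X - {x})"
    proof (rule ccontr)
      assume "\<not> ?thesis"
      then have "?cover (X - {x})" using X unfolding nbhd_set_def by blast
      then show False
        using least[of "X - {x}"] card_Diff1_less[OF \<open>finite X\<close> \<open>x \<in> X\<close>] by linarith
    qed
  qed
  then show thesis using X that by blast
qed

lemma nbr_of_red_part:
  assumes "graph V E" "proper_2_coloring V E \<chi>" "nbhd_set E A \<subseteq> insert s A" "\<chi> s = Red"
    and "r \<in> A" "\<chi> r = Red" "adj E r b"
  shows "b \<in> A \<and> \<chi> b = Blue"
proof -
  have "\<chi> b = Blue" using proper_2_coloring_adj[OF assms(1,2,7)] assms(6) by simp
  moreover have "b \<in> nbhd_set E A"
    using assms(5,7) adj_commute unfolding nbhd_set_def by fastforce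
  ultimately show ?thesis using assms(3,4) by auto
qed

lemma nbhd_subset_red_part:
  assumes "graph V E" "proper_2_coloring V E \<chi>" "nbhd_set E A \<subseteq> insert s A"
    and "b \<in> A" "\<chi> b = Blue" "\<not> adj E s b"
  shows "nbhd E b \<subseteq> {r \<in> A. \<chi> r = Red}"
proof
  fix r assume "r \<in> nbhd E b"
  then have "adj E r b" by simp
  then have "\<chi> r = Red" "r \<noteq> s"
    using proper_2_coloring_adj[OF assms(1,2)] assms(5,6) by auto
  moreover have "r \<in> nbhd_set E A" using \<open>r \<in> nbhd E b\<close> assms(4) unfolding nbhd_set_def by blast
  ultimately show "r \<in> {r \<in> A. \<chi> r = Red}" using assms(3) by blast
qed

lemma red_part_private_subcover:
  assumes tree: "tree V E" and pc: "proper_2_coloring V E \<chi>"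
    and leaves: "\<forall>v. leaf V E v \<longrightarrow> \<chi> v = Blue" and nb: "\<forall>v\<in>V. \<exists>y. adj E v y"
    and sR: "\<chi> s = Red" and AV: "A \<subseteq> V" and closed: "nbhd_set E A \<subseteq> insert s A"
    and Z: "Z \<subseteq> {r \<in> A. \<chi> r = Red}" "c \<notin> Z"
  obtains X where "X \<subseteq> {b \<in> A. \<chi> b = Blue \<and> \<not> adj E c b}" "Z \<subseteq> nbhd_set E X"
    "has_private_nbrs E Z X"
proof -
  define B where "B = {b \<in> A. \<chi> b = Blue \<and> \<not> adj E c b}"
  have g: "graph V E" using tree unfolding tree_def by blast
  have "finite B" using finite_subset[OF AV] g unfolding B_def graph_def by simp
  have "Z \<subseteq> nbhd_set E B"
  proof
    fix r assume "r \<in> Z"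
    then have r: "r \<in> A" "\<chi> r = Red" "r \<noteq> c" using Z by auto
    then have "r \<in> V" "\<not> leaf V E r" using AV leaves by auto
    moreover obtain a where "adj E r a" using nb \<open>r \<in> V\<close> by blast
    ultimately obtain b where "adj E r b" "\<not> adj E c b" using tree_nbr_not_adj[OF tree] r(3) by metis
    then have "b \<in> B" using nbr_of_red_part[OF g pc closed sR r(1,2)] unfolding B_def by blast
    then show "r \<in> nbhd_set E B" using \<open>adj E r b\<close> unfolding nbhd_set_def by auto
  qed
  then show thesis using exists_private_subcover[OF \<open>finite B\<close>] that unfolding B_def by blast
qed

lemma red_part_private_cover:
  assumes tree: "tree V E" and pc: "proper_2_coloring V E \<chi>"
    and leaves: "\<forall>v. leaf V E v \<longrightarrow> \<chi> v = Blue" and nb: "\<forall>v\<in>V. \<exists>y. adj E v y"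
    and sR: "\<chi> s = Red" and AV: "A \<subseteq> V" and closed: "nbhd_set E A \<subseteq> insert s A" and "s \<notin> A"
  obtains P where "P \<subseteq> {b \<in> A. \<not> adj E s b}"
    "nbhd_set E P = {r \<in> A. \<chi> r = Red}" "has_private_nbrs E {r \<in> A. \<chi> r = Red} P"
proof -
  let ?R = "{r \<in> A. \<chi> r = Red}"
  have g: "graph V E" using tree unfolding tree_def by blast
  obtain P where P: "P \<subseteq> {b \<in> A. \<chi> b = Blue \<and> \<not> adj E s b}" "?R \<subseteq> nbhd_set E P"
      "has_private_nbrs E ?R P"
    using red_part_private_subcover[OF tree pc leaves nb sR AV closed, of ?R s] \<open>s \<notin> A\<close> by blast
  have "nbhd_set E P \<subseteq> ?R"
    using P(1) nbhd_subset_red_part[OF g pc closed] unfolding nbhd_set_def by blast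
  then show thesis using that P by blast
qed

lemma red_part_private_cover_through_root:
  assumes tree: "tree V E" and pc: "proper_2_coloring V E \<chi>"
    and leaves: "\<forall>v. leaf V E v \<longrightarrow> \<chi> v = Blue" and nb: "\<forall>v\<in>V. \<exists>y. adj E v y"
    and sR: "\<chi> s = Red" and AV: "A \<subseteq> V" and closed: "nbhd_set E A \<subseteq> insert s A"
    and u: "u \<in> A" "adj E s u" "\<not> leaf V E u" and root: "\<forall>b\<in>A. adj E s b \<longrightarrow> b = u"
  obtains Q where "Q \<subseteq> A"
    "nbhd_set E Q = insert s {r \<in> A. \<chi> r = Red}" "has_private_nbrs E {r \<in> A. \<chi> r = Red} Q"
proof -
  let ?R = "{r \<in> A. \<chi> r = Red}"
  have g: "graph V E" using tree unfolding tree_def by blast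
  have uB: "\<chi> u = Blue" using proper_2_coloring_adj[OF g pc u(2)] sR by simp
  have nbhd_u: "nbhd E u \<subseteq> insert s ?R"
  proof
    fix y assume "y \<in> nbhd E u"
    then have "y \<in> insert s A" using closed u(1) unfolding nbhd_set_def by blast
    moreover have "\<chi> y = Red" using proper_2_coloring_adj[OF g pc] \<open>y \<in> nbhd E u\<close> uB by simp
    ultimately show "y \<in> insert s ?R" by blast
  qed
  obtain w where "adj E u w" "w \<noteq> s"
    using other_nbr[OF g _ u(3)] u(1) AV adj_commute[of E s u] u(2) by blast
  then have w: "w \<in> nbhd E u" "w \<in> ?R" using nbhd_u adj_commute[of E u w] by auto
  \<comment> \<open>\<open>w\<close> will be the private neighbour of \<open>u\<close>, so the rest of the red part is
    covered by blue vertices not adjacent to \<open>w\<close>; these are not \<open>u\<close>, hence not adjacent to \<open>s\<close>.\<close>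
  define Z where "Z = ?R - nbhd E u"
  obtain Q' where Q': "Q' \<subseteq> {b \<in> A. \<chi> b = Blue \<and> \<not> adj E w b}" "Z \<subseteq> nbhd_set E Q'"
      "has_private_nbrs E Z Q'"
    using red_part_private_subcover[OF tree pc leaves nb sR AV closed, of Z w] w(1)
    unfolding Z_def by blast
  have "\<not> adj E s b" if "b \<in> Q'" for b
    using that Q'(1) w(1) root by auto
  then have "nbhd_set E Q' \<subseteq> ?R"
    using Q'(1) nbhd_subset_red_part[OF g pc closed] unfolding nbhd_set_def by blast
  then have nbhd_Q: "nbhd_set E (insert u Q') = insert s ?R"
    using nbhd_u u(2) Q'(2) unfolding nbhd_set_insert Z_def by auto
  have "has_private_nbrs E ({w} \<union> Z) ({u} \<union> Q')"
  proof (rule has_private_nbrs_Un[OF has_private_nbrs_singleton[OF w(1)] Q'(3)])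
    show "nbhd_set E Q' \<inter> {w} = {}" using Q'(1) unfolding nbhd_set_def by auto
    show "nbhd_set E {u} \<inter> Z = {}" unfolding Z_def nbhd_set_singleton by blast
  qed simp
  moreover have "{w} \<union> Z \<subseteq> ?R" using w(2) unfolding Z_def by blast
  ultimately have "has_private_nbrs E ?R (insert u Q')"
    using has_private_nbrs_mono by fastforce
  moreover have "insert u Q' \<subseteq> A" using Q'(1) u(1) by blast
  ultimately show thesis using that nbhd_Q by blast
qed

lemma nbhd_set_rest_closed:
  assumes "graph V E" "nbhd_set E A \<subseteq> insert s A"
  shows "nbhd_set E (V - insert s A) \<subseteq> insert s (V - insert s A)"
proof
  fix y assume "y \<in> nbhd_set E (V - insert s A)"
  then obtain x where x: "x \<in> V" "x \<notin> insert s A" "adj E y x" unfolding nbhd_set_def by auto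
  have "y \<notin> A"
  proof
    assume "y \<in> A"
    then have "x \<in> nbhd_set E A" using x(3) adj_commute[of E y x] unfolding nbhd_set_def by auto
    then show False using assms(2) x(2) by blast
  qed
  then show "y \<in> insert s (V - insert s A)" using adj_imp_in_V[OF assms(1) x(3)] by blast
qed

definition branch :: "'a set set \<Rightarrow> 'a \<Rightarrow> 'a \<Rightarrow> 'a set" where
  "branch E s u = {v. (adj_avoiding E s)\<^sup>*\<^sup>* u v}"

lemma root_in_branch: "u \<in> branch E s u"
  unfolding branch_def by simp

lemma branch_subset:
  assumes "graph V E" "u \<in> V" "u \<noteq> s"
  shows "branch E s u \<subseteq> V - {s}"
proof
  fix v assume "v \<in> branch E s u"
  then have "(adj_avoiding E s)\<^sup>*\<^sup>* u v" unfolding branch_def by simp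
  then show "v \<in> V - {s}"
    by induction (use assms adj_imp_in_V[OF assms(1)] in \<open>auto simp: adj_avoiding_def\<close>)
qed

lemma nbhd_set_branch:
  assumes "graph V E" "u \<in> V" "u \<noteq> s"
  shows "nbhd_set E (branch E s u) \<subseteq> insert s (branch E s u)"
proof
  fix y assume "y \<in> nbhd_set E (branch E s u)"
  then obtain x where x: "x \<in> branch E s u" "adj E y x" unfolding nbhd_set_def by auto
  have "x \<noteq> s" using x(1) branch_subset[OF assms] by blast
  then have "y = s \<or> adj_avoiding E s x y"
    using x(2) adj_commute[of E y x] unfolding adj_avoiding_def by blast
  then show "y \<in> insert s (branch E s u)"
    using x(1) unfolding branch_def by (auto intro: rtranclp.rtrancl_into_rtrancl)
qed

lemma branch_nbr_root:
  assumes "tree V E" "adj E s u" "b \<in> branch E s u" "adj E s b"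
  shows "b = u"
  using tree_no_path_avoiding[OF assms(1,2,4)] assms(3) unfolding branch_def by blast

lemma branches_disjoint:
  assumes "tree V E" "adj E s u1" "adj E s u2" "u1 \<noteq> u2"
  shows "branch E s u1 \<inter> branch E s u2 = {}"
proof (rule ccontr)
  assume "branch E s u1 \<inter> branch E s u2 \<noteq> {}"
  then obtain v where "(adj_avoiding E s)\<^sup>*\<^sup>* u1 v" "(adj_avoiding E s)\<^sup>*\<^sup>* u2 v"
    unfolding branch_def by blast
  moreover have "(adj_avoiding E s)\<inverse>\<inverse> = adj_avoiding E s"
    using adj_commute by (fastforce simp: adj_avoiding_def fun_eq_iff)
  ultimately have "(adj_avoiding E s)\<^sup>*\<^sup>* u1 u2"
    by (metis rtranclp.rtrancl_refl rtranclp_converseI rtranclp_trans)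
  then show False using tree_no_path_avoiding[OF assms] by blast
qed

lemma branch_private_covers:
  assumes tree: "tree V E" and pc: "proper_2_coloring V E \<chi>"
    and leaves: "\<forall>v. leaf V E v \<longrightarrow> \<chi> v = Blue" and nb: "\<forall>v\<in>V. \<exists>y. adj E v y"
    and sR: "\<chi> s = Red" and u: "adj E s u" "\<not> leaf V E u"
  obtains P Q where "P \<subseteq> {b \<in> branch E s u. \<not> adj E s b}" "Q \<subseteq> branch E s u"
    "nbhd_set E P = {r \<in> branch E s u. \<chi> r = Red}"
    "has_private_nbrs E {r \<in> branch E s u. \<chi> r = Red} P"
    "nbhd_set E Q = insert s {r \<in> branch E s u. \<chi> r = Red}"
    "has_private_nbrs E {r \<in> branch E s u. \<chi> r = Red} Q"
proof -
  have g: "graph V E" using tree unfolding tree_def by blast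
  have "u \<in> V" "u \<noteq> s" using adj_imp_in_V[OF g u(1)] not_adj_self[OF g, of s] u(1) by auto
  then have C: "branch E s u \<subseteq> V" "s \<notin> branch E s u"
      "nbhd_set E (branch E s u) \<subseteq> insert s (branch E s u)"
    using branch_subset[OF g] nbhd_set_branch[OF g] by blast+
  obtain P where "P \<subseteq> {b \<in> branch E s u. \<not> adj E s b}"
      "nbhd_set E P = {r \<in> branch E s u. \<chi> r = Red}"
      "has_private_nbrs E {r \<in> branch E s u. \<chi> r = Red} P"
    using red_part_private_cover[OF tree pc leaves nb sR C(1,3,2)] by blast
  moreover obtain Q where "Q \<subseteq> branch E s u"
      "nbhd_set E Q = insert s {r \<in> branch E s u. \<chi> r = Red}"
      "has_private_nbrs E {r \<in> branch E s u. \<chi> r = Red} Q"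
    using red_part_private_cover_through_root[OF tree pc leaves nb sR C(1,3) root_in_branch u]
      branch_nbr_root[OF tree u(1)] by blast
  ultimately show thesis using that by blast
qed

lemma minimal_RD_sets_from_branch_covers:
  assumes red: "{v \<in> V. \<chi> v = Red} = insert s (R0 \<union> R1 \<union> R2)"
    and R: "s \<notin> R0 \<union> R1 \<union> R2" "R0 \<inter> R1 = {}" "R0 \<inter> R2 = {}" "R1 \<inter> R2 = {}"
    and l: "l \<in> V" "nbhd E l = {s}" and V: "P0 \<union> P1 \<union> P2 \<union> Q1 \<union> Q2 \<subseteq> V"
    and P0: "nbhd_set E P0 = R0" "has_private_nbrs E R0 P0"
    and P1: "nbhd_set E P1 = R1" "has_private_nbrs E R1 P1"
    and P2: "nbhd_set E P2 = R2" "has_private_nbrs E R2 P2"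
    and Q1: "nbhd_set E Q1 = insert s R1" "has_private_nbrs E R1 Q1"
    and Q2: "nbhd_set E Q2 = insert s R2" "has_private_nbrs E R2 Q2"
  shows "minimal_RD_set V E \<chi> ({l} \<union> (P0 \<union> P1 \<union> P2))"
    and "minimal_RD_set V E \<chi> (P0 \<union> Q1 \<union> P2)"
    and "minimal_RD_set V E \<chi> (P0 \<union> P1 \<union> Q2)"
    and "minimal_RD_set V E \<chi> (P0 \<union> Q1 \<union> Q2)"
proof -
  have RV: "R0 \<union> R1 \<union> R2 \<subseteq> {v \<in> V. \<chi> v = Red}" using red by blast
  have privates: "has_private_nbrs E (R0 \<union> R1 \<union> R2) (P0 \<union> X1 \<union> X2)"
    if "nbhd_set E X1 \<subseteq> insert s R1" "has_private_nbrs E R1 X1"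
      "nbhd_set E X2 \<subseteq> insert s R2" "has_private_nbrs E R2 X2" for X1 X2
    by (intro has_private_nbrs_Un P0(2) that(2,4))
      (use that(1,3) R P0(1) in \<open>auto simp: nbhd_set_Un\<close>)
  show "minimal_RD_set V E \<chi> ({l} \<union> (P0 \<union> P1 \<union> P2))"
  proof (rule minimal_RD_setI)
    show "{l} \<union> (P0 \<union> P1 \<union> P2) \<subseteq> V" using l(1) V by blast
    show "nbhd_set E ({l} \<union> (P0 \<union> P1 \<union> P2)) = {v \<in> V. \<chi> v = Red}"
      unfolding red nbhd_set_Un P0 P1 P2 nbhd_set_singleton l(2) by blast
    show "has_private_nbrs E ({s} \<union> (R0 \<union> R1 \<union> R2)) ({l} \<union> (P0 \<union> P1 \<union> P2))"
      by (intro has_private_nbrs_Un has_private_nbrs_singleton privates)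
        (use R in \<open>auto simp: l(2) P0 P1 P2 Q1 Q2 nbhd_set_Un nbhd_set_singleton\<close>)
  qed (use red in auto)
  show "minimal_RD_set V E \<chi> (P0 \<union> Q1 \<union> P2)"
    by (rule minimal_RD_setI[OF _ _ privates RV])
      (use V in \<open>auto simp: red nbhd_set_Un P0 P1 P2 Q1 Q2\<close>)
  show "minimal_RD_set V E \<chi> (P0 \<union> P1 \<union> Q2)"
    by (rule minimal_RD_setI[OF _ _ privates RV])
      (use V in \<open>auto simp: red nbhd_set_Un P0 P1 P2 Q1 Q2\<close>)
  show "minimal_RD_set V E \<chi> (P0 \<union> Q1 \<union> Q2)"
    by (rule minimal_RD_setI[OF _ _ privates RV])
      (use V in \<open>auto simp: red nbhd_set_Un P0 P1 P2 Q1 Q2\<close>)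
qed

lemma card_exchange_differs:
  assumes fin: "finite P0" "finite P1" "finite P2" "finite Q1" "finite Q2"
    and disj: "l \<notin> P0 \<union> P1 \<union> P2" "P0 \<inter> (P1 \<union> Q1) = {}" "P0 \<inter> (P2 \<union> Q2) = {}"
      "(P1 \<union> Q1) \<inter> (P2 \<union> Q2) = {}"
  shows "card ({l} \<union> (P0 \<union> P1 \<union> P2)) \<noteq> card (P0 \<union> Q1 \<union> P2)
    \<or> card (P0 \<union> P1 \<union> Q2) \<noteq> card (P0 \<union> Q1 \<union> Q2)"
proof -
  have "card ({l} \<union> (P0 \<union> P1 \<union> P2)) = 1 + card P0 + card P1 + card P2"
    using fin disj by (simp add: card_Un_disjoint Int_Un_distrib Int_Un_distrib2)
  moreover have "card (P0 \<union> Q1 \<union> P2) = card P0 + card Q1 + card P2"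
    using fin disj by (simp add: card_Un_disjoint Int_Un_distrib Int_Un_distrib2)
  moreover have "card (P0 \<union> P1 \<union> Q2) = card P0 + card P1 + card Q2"
    using fin disj by (simp add: card_Un_disjoint Int_Un_distrib Int_Un_distrib2)
  moreover have "card (P0 \<union> Q1 \<union> Q2) = card P0 + card Q1 + card Q2"
    using fin disj by (simp add: card_Un_disjoint Int_Un_distrib Int_Un_distrib2)
  ultimately show ?thesis by linarith
qed

lemma minimal_RD_sets_of_distinct_card:
  assumes tree: "tree V E" and pc: "proper_2_coloring V E \<chi>"
    and leaves: "\<forall>v. leaf V E v \<longrightarrow> \<chi> v = Blue" and nb: "\<forall>v\<in>V. \<exists>y. adj E v y"
    and l: "leaf V E l" "adj E s l"
    and u: "adj E s u1" "adj E s u2" "u1 \<noteq> u2" "\<not> leaf V E u1" "\<not> leaf V E u2"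
  shows "\<exists>D1 D2. minimal_RD_set V E \<chi> D1 \<and> minimal_RD_set V E \<chi> D2 \<and> card D1 \<noteq> card D2"
proof -
  have g: "graph V E" using tree unfolding tree_def by blast
  have sR: "\<chi> s = Red" using proper_2_coloring_adj[OF g pc l(2)] leaves l(1) by simp
  have "l \<in> V" "s \<in> V" using adj_imp_in_V[OF g l(2)] by auto
  define C1 where "C1 = branch E s u1"
  define C2 where "C2 = branch E s u2"
  define C0 where "C0 = V - insert s (C1 \<union> C2)"
  define R0 where "R0 = {r \<in> C0. \<chi> r = Red}"
  define R1 where "R1 = {r \<in> C1. \<chi> r = Red}"
  define R2 where "R2 = {r \<in> C2. \<chi> r = Red}"
  have "u1 \<in> V" "u2 \<in> V" "u1 \<noteq> s" "u2 \<noteq> s"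
    using adj_imp_in_V[OF g u(1)] adj_imp_in_V[OF g u(2)] not_adj_self[OF g, of s] u(1,2) by auto
  then have C12: "C1 \<union> C2 \<subseteq> V - {s}" "nbhd_set E (C1 \<union> C2) \<subseteq> insert s (C1 \<union> C2)"
    using branch_subset[OF g] nbhd_set_branch[OF g] unfolding C1_def C2_def nbhd_set_Un by blast+
  have "C1 \<inter> C2 = {}" unfolding C1_def C2_def by (rule branches_disjoint[OF tree u(1-3)])
  have C0: "C0 \<subseteq> V" "nbhd_set E C0 \<subseteq> insert s C0" "s \<notin> C0"
    unfolding C0_def using nbhd_set_rest_closed[OF g C12(2)] by auto
  obtain P0 where P0: "P0 \<subseteq> {b \<in> C0. \<not> adj E s b}" "nbhd_set E P0 = R0" "has_private_nbrs E R0 P0"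
    using red_part_private_cover[OF tree pc leaves nb sR C0] unfolding R0_def by blast
  obtain P1 Q1 where PQ1: "P1 \<subseteq> {b \<in> C1. \<not> adj E s b}" "Q1 \<subseteq> C1"
      "nbhd_set E P1 = R1" "has_private_nbrs E R1 P1"
      "nbhd_set E Q1 = insert s R1" "has_private_nbrs E R1 Q1"
    using branch_private_covers[OF tree pc leaves nb sR u(1,4)] unfolding C1_def R1_def by blast
  obtain P2 Q2 where PQ2: "P2 \<subseteq> {b \<in> C2. \<not> adj E s b}" "Q2 \<subseteq> C2"
      "nbhd_set E P2 = R2" "has_private_nbrs E R2 P2"
      "nbhd_set E Q2 = insert s R2" "has_private_nbrs E R2 Q2"
    using branch_private_covers[OF tree pc leaves nb sR u(2,5)] unfolding C2_def R2_def by blast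
  have red: "{v \<in> V. \<chi> v = Red} = insert s (R0 \<union> R1 \<union> R2)"
    "s \<notin> R0 \<union> R1 \<union> R2" "R0 \<inter> R1 = {}" "R0 \<inter> R2 = {}" "R1 \<inter> R2 = {}"
    using C12(1) \<open>C1 \<inter> C2 = {}\<close> sR \<open>s \<in> V\<close> unfolding R0_def R1_def R2_def C0_def by auto
  have V: "P0 \<union> P1 \<union> P2 \<union> Q1 \<union> Q2 \<subseteq> V" using P0(1) PQ1 PQ2 C0(1) C12(1) by blast
  note minimal = minimal_RD_sets_from_branch_covers[OF red \<open>l \<in> V\<close>
      leaf_nbhd[OF l] V P0(2,3) PQ1(3,4) PQ2(3,4) PQ1(5,6) PQ2(5,6)]
  have "finite X" if "X \<subseteq> V" for X using g that finite_subset unfolding graph_def by blast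
  then have "card ({l} \<union> (P0 \<union> P1 \<union> P2)) \<noteq> card (P0 \<union> Q1 \<union> P2)
    \<or> card (P0 \<union> P1 \<union> Q2) \<noteq> card (P0 \<union> Q1 \<union> Q2)"
    by (intro card_exchange_differs)
      (use V P0(1) PQ1(1,2) PQ2(1,2) l(2) \<open>C1 \<inter> C2 = {}\<close> in \<open>auto simp: C0_def\<close>)
  then show ?thesis using minimal by blast
qed

lemma RD_set_Blue:
  assumes g: "graph V E" and pc: "proper_2_coloring V E \<chi>" and nb: "\<forall>v\<in>V. \<exists>y. adj E v y"
    and D: "RD_set V E \<chi> D" "d \<in> D"
  shows "\<chi> d = Blue"
proof -
  obtain y where "adj E d y" using nb D unfolding RD_set_def by blast
  then have "\<chi> y = Red" using D adj_commute[of E d y] unfolding RD_set_def nbhd_set_def by auto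
  then show ?thesis using proper_2_coloring_adj[OF g pc \<open>adj E d y\<close>] by simp
qed

lemma Blue_private_cover:
  assumes g: "graph V E" and pc: "proper_2_coloring V E \<chi>" and nb: "\<forall>v\<in>V. \<exists>y. adj E v y"
  obtains Z where "Z \<subseteq> {v \<in> V. \<chi> v = Red}" "nbhd_set E Z = {v \<in> V. \<chi> v = Blue}"
    "has_private_nbrs E {v \<in> V. \<chi> v = Blue} Z"
proof -
  let ?Red = "{v \<in> V. \<chi> v = Red}" and ?Blue = "{v \<in> V. \<chi> v = Blue}"
  have covered: "?Blue \<subseteq> nbhd_set E ?Red"
  proof
    fix v assume v: "v \<in> ?Blue"
    then obtain y where "adj E v y" using nb by blast
    then have "y \<in> ?Red" "v \<in> nbhd E y"
      using v adj_imp_in_V[OF g \<open>adj E v y\<close>] proper_2_coloring_adj[OF g pc \<open>adj E v y\<close>]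
        adj_commute[of E v y] by auto
    then show "v \<in> nbhd_set E ?Red" unfolding nbhd_set_def by blast
  qed
  have "finite ?Red" using g unfolding graph_def by simp
  then obtain Z where Z: "Z \<subseteq> ?Red" "?Blue \<subseteq> nbhd_set E Z" "has_private_nbrs E ?Blue Z"
    using exists_private_subcover[OF _ covered] by blast
  have "nbhd_set E Z \<subseteq> ?Blue"
  proof
    fix y assume "y \<in> nbhd_set E Z"
    then obtain x where "x \<in> Z" "adj E y x" unfolding nbhd_set_def by auto
    then show "y \<in> ?Blue"
      using Z(1) adj_imp_in_V[OF g, of y x] proper_2_coloring_adj[OF g pc, of y x] by auto
  qed
  then show thesis using that Z by blast
qed

lemma minimal_TD_set_Un:
  assumes g: "graph V E" and pc: "proper_2_coloring V E \<chi>" and nb: "\<forall>v\<in>V. \<exists>y. adj E v y"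
    and D: "minimal_RD_set V E \<chi> D"
    and Z: "Z \<subseteq> {v \<in> V. \<chi> v = Red}" "nbhd_set E Z = {v \<in> V. \<chi> v = Blue}"
      "has_private_nbrs E {v \<in> V. \<chi> v = Blue} Z"
  shows "minimal_TD_set V E (D \<union> Z)" and "card (D \<union> Z) = card D + card Z"
proof -
  have RD: "RD_set V E \<chi> D" "has_private_nbrs E {v \<in> V. \<chi> v = Red} D"
    using D unfolding minimal_RD_set_iff by blast+
  have "finite V" using g unfolding graph_def by blast
  then have "finite D" "finite Z"
    using RD(1) finite_subset[OF Z(1)] finite_subset unfolding RD_set_def by auto
  moreover have "D \<inter> Z = {}" using RD_set_Blue[OF g pc nb RD(1)] Z(1) by fastforce
  ultimately show "card (D \<union> Z) = card D + card Z" by (simp add: card_Un_disjoint)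
  have "has_private_nbrs E ({v \<in> V. \<chi> v = Red} \<union> {v \<in> V. \<chi> v = Blue}) (D \<union> Z)"
    using RD(1) by (intro has_private_nbrs_Un RD(2) Z(3)) (auto simp: Z(2) RD_set_def)
  moreover have "{v \<in> V. \<chi> v = Red} \<union> {v \<in> V. \<chi> v = Blue} = V" by (auto intro: color.exhaust)
  ultimately show "minimal_TD_set V E (D \<union> Z)"
    using RD(1) Z(1,2) unfolding minimal_TD_set_iff TD_set_def RD_set_def nbhd_set_Un by auto
qed

lemma mixed_if_minimal_RD_sets_differ:
  assumes g: "graph V E" and pc: "proper_2_coloring V E \<chi>" and nb: "\<forall>v\<in>V. \<exists>y. adj E v y"
    and D: "minimal_RD_set V E \<chi> D1" "minimal_RD_set V E \<chi> D2" "card D1 \<noteq> card D2"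
  shows "mixed V E"
proof -
  obtain Z where Z: "Z \<subseteq> {v \<in> V. \<chi> v = Red}" "nbhd_set E Z = {v \<in> V. \<chi> v = Blue}"
      "has_private_nbrs E {v \<in> V. \<chi> v = Blue} Z"
    using Blue_private_cover[OF g pc nb] .
  note TD1 = minimal_TD_set_Un[OF g pc nb D(1) Z] and TD2 = minimal_TD_set_Un[OF g pc nb D(2) Z]
  show ?thesis
    unfolding mixed_def
  proof (intro exI conjI)
    show "card (D1 \<union> Z) \<noteq> card (D2 \<union> Z)" using TD1(2) TD2(2) D(3) by simp
  qed (fact TD1(1) TD2(1))+
qed

theorem theorem3p35:
  fixes V :: "'a set" and E :: "'a set set" and \<chi> :: "'a \<Rightarrow> color" and s :: 'a
  assumes "tree V E"
    and "balanced V E"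
    and "proper_2_coloring V E \<chi>"
    and "\<forall>v. leaf V E v \<longrightarrow> \<chi> v = Blue"
    and "support_vertex V E s" and "s \<in> level V E 1"
    and "card (nbhd E s \<inter> level V E 2) \<ge> 2"
  shows "(\<exists>D1 D2. minimal_RD_set V E \<chi> D1 \<and> minimal_RD_set V E \<chi> D2 \<and> card D1 \<noteq> card D2)
         \<and> mixed V E"
proof -
  obtain l where l: "leaf V E l" "adj E s l"
    using assms(5) unfolding support_vertex_def by blast
  obtain u1 u2 where u: "adj E s u1" "adj E s u2" "u1 \<noteq> u2" "\<not> leaf V E u1" "\<not> leaf V E u2"
    using two_non_leaf_nbrs[OF assms(7)] .
  have nb: "\<forall>v\<in>V. \<exists>y. adj E v y" using tree_no_isolated[OF assms(1) l(2)] by blast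
  obtain D1 D2 where D: "minimal_RD_set V E \<chi> D1" "minimal_RD_set V E \<chi> D2" "card D1 \<noteq> card D2"
    using minimal_RD_sets_of_distinct_card[OF assms(1,3,4) nb l u] by blast
  moreover have "graph V E" using assms(1) unfolding tree_def by blast
  ultimately show ?thesis using mixed_if_minimal_RD_sets_differ[OF _ assms(3) nb] by blast
qed

end
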